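(* For $n\in\mathbb{N}^\star$ let $\phi_n(x)=\int_0^\pi e^{-2x\sin\eta}e^{2in\eta}\,\mathrm{d}\eta$. Then for every $x>0$ and $n\ge1$, $$\frac12\,\frac{(2n+1)x}{(n^2+x^2)\big((n+1)^2+x^2\big)}\le\phi_n(x)-\phi_{n+1}(x)\le4\,\frac{(2n+1)x}{(n^2+x^2)\big((n+1)^2+x^2\big)}.$$ *)

theory Defs
  imports "HOL-Analysis.Analysis"
begin

definition phi :: "nat \<Rightarrow> real \<Rightarrow> complex" where
  "phi n x = integral {0..pi} (\<lambda>\<eta>. exp (complex_of_real (-2 * x * sin \<eta>)) * exp (\<i> * of_real (2 * real n * \<eta>)))"

end

theory Submission
  imports Defs
begin

(* The sine part of the integrand is odd about pi/2, so phi_k is real; call it c_k (phi_real k).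
   Differentiating under the integral and integrating by parts shows that c_k solves the
   inhomogeneous modified Bessel equation  x^2 c'' + x c' - 4 (x^2 + k^2) c = -4x,  and c_k
   vanishes at 0 (for k >= 1) and at infinity.  The rational function Y_k = x / (k^2 + x^2)
   (lorentz k) solves the same equation up to an error between -Y_k and Y_k.  Since the
   operator has a negative zeroth-order coefficient, a function vanishing at both ends of
   (0, oo) on which it is nonnegative cannot have a positive maximum; comparing c_k with
   multiples of Y_k gives 3/4 Y_k <= c_k <= 2 Y_k.  The difference c_n - c_(n+1) satisfies the
   equation of order n with right-hand side -4 (2n + 1) c_(n+1); the same comparison with
   Y_n - Y_(n+1), using these bounds on c_(n+1) and Y_n <= (4n + 1) Y_(n+1), yields the
   theorem. *)

lemma has_integral_real_derivative:
  fixes a b :: real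
  assumes "a \<le> b" and "\<And>t. t \<in> {a..b} \<Longrightarrow> (F has_real_derivative f t) (at t)"
  shows "(f has_integral F b - F a) {a..b}"
  using assms by (intro fundamental_theorem_of_calculus)
    (auto simp: has_real_derivative_iff_has_vector_derivative intro: has_vector_derivative_at_within)

lemma has_integral_reflect_midpoint:
  fixes f :: "real \<Rightarrow> 'a::banach"
  assumes "(f has_integral I) {a..b}"
  shows "((\<lambda>t. f (a + b - t)) has_integral I) {a..b}"
proof -
  have "((\<lambda>t. f (- t)) has_integral I) {-b..-a}"
    using assms by simp
  then have "(((\<lambda>t. f (- t)) \<circ> (+) (- (a + b))) has_integral I) {a..b}"
    by (simp add: has_integral_shift_Icc_real)
  then show ?thesis
    by (simp add: o_def add.commute)
qed

lemma integral_eq_0_if_odd_about_midpoint: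
  fixes f :: "real \<Rightarrow> 'a::banach"
  assumes "f integrable_on {a..b}" and "\<And>t. f (a + b - t) = - f t"
  shows "integral {a..b} f = 0"
proof -
  have "((\<lambda>t. - f t) has_integral integral {a..b} f) {a..b}"
    using has_integral_reflect_midpoint[OF integrable_integral[OF assms(1)]] assms(2) by simp
  then have "integral {a..b} f = - integral {a..b} f"
    using has_integral_neg[OF integrable_integral[OF assms(1)]] has_integral_unique by blast
  then have "(2::real) *\<^sub>R integral {a..b} f = 0"
    by (simp add: scaleR_2 eq_neg_iff_add_eq_0)
  then show ?thesis
    by simp
qed

section \<open>A maximum principle on the half-line\<close>

definition has_two_derivatives_on ::
    "real set \<Rightarrow> (real \<Rightarrow> real) \<Rightarrow> (real \<Rightarrow> real) \<Rightarrow> (real \<Rightarrow> real) \<Rightarrow> bool" where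
  "has_two_derivatives_on S f f' f'' \<longleftrightarrow>
    (\<forall>x\<in>S. (f has_real_derivative f' x) (at x) \<and> (f' has_real_derivative f'' x) (at x))"

lemma has_two_derivatives_on_diff:
  "has_two_derivatives_on S f f' f'' \<Longrightarrow> has_two_derivatives_on S g g' g'' \<Longrightarrow>
    has_two_derivatives_on S (\<lambda>x. f x - g x) (\<lambda>x. f' x - g' x) (\<lambda>x. f'' x - g'' x)"
  unfolding has_two_derivatives_on_def by (auto intro: DERIV_diff)

lemma has_two_derivatives_on_cmult:
  "has_two_derivatives_on S f f' f'' \<Longrightarrow>
    has_two_derivatives_on S (\<lambda>x. c * f x) (\<lambda>x. c * f' x) (\<lambda>x. c * f'' x)"
  unfolding has_two_derivatives_on_def by (auto intro: DERIV_cmult)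

lemma local_max_imp_second_deriv_nonpos:
  fixes w w' :: "real \<Rightarrow> real"
  assumes "d > 0"
    and w': "\<And>y. \<bar>y - z\<bar> < d \<Longrightarrow> (w has_real_derivative w' y) (at y)"
    and w'': "(w' has_real_derivative l) (at z)"
    and max: "\<And>y. \<bar>y - z\<bar> < d \<Longrightarrow> w y \<le> w z"
  shows "l \<le> 0"
proof (rule ccontr)
  assume "\<not> l \<le> 0"
  have "w' z = 0"
    using DERIV_local_max[OF w'[of z] \<open>d > 0\<close>] max \<open>d > 0\<close> by (simp add: abs_minus_commute)
  obtain e where "e > 0" and w'_inc: "\<And>h. 0 < h \<Longrightarrow> h < e \<Longrightarrow> w' z < w' (z + h)"
    using DERIV_pos_inc_right[OF w''] \<open>\<not> l \<le> 0\<close> by auto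
  define h where "h = min d e / 2"
  have h: "0 < h" "h < d" "h < e"
    using \<open>d > 0\<close> \<open>e > 0\<close> by (auto simp: h_def)
  obtain \<xi> where "z < \<xi>" "\<xi> < z + h" and mvt: "w (z + h) - w z = h * w' \<xi>"
    using MVT2[of z "z + h" w w'] h w' by auto
  have "w' \<xi> > 0"
    using w'_inc[of "\<xi> - z"] \<open>w' z = 0\<close> \<open>z < \<xi>\<close> \<open>\<xi> < z + h\<close> h by simp
  then have "w z < w (z + h)"
    using mvt h by (simp add: algebra_simps)
  moreover have "w (z + h) \<le> w z"
    using max h by simp
  ultimately show False
    by simp
qed

lemma attains_max_on_halfline:
  fixes w :: "real \<Rightarrow> real"
  assumes cont: "continuous_on {0<..} w"
    and lim0: "(w \<longlongrightarrow> 0) (at_right 0)" and lim_top: "(w \<longlongrightarrow> 0) at_top"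
    and "x0 > 0" and "w x0 > 0"
  shows "\<exists>z>0. \<forall>y>0. w y \<le> w z"
proof -
  obtain a where "a > 0" and near0: "\<And>y. 0 < y \<Longrightarrow> y < a \<Longrightarrow> w y < w x0"
    using order_tendstoD(2)[OF lim0 \<open>w x0 > 0\<close>] unfolding eventually_at_right_field by auto
  obtain b where near_top: "\<And>y. y \<ge> b \<Longrightarrow> w y < w x0"
    using order_tendstoD(2)[OF lim_top \<open>w x0 > 0\<close>] unfolding eventually_at_top_linorder by auto
  define a' where "a' = min (a / 2) x0"
  define b' where "b' = max b x0"
  have "0 < a'" "a' \<le> x0" "x0 \<le> b'"
    using \<open>a > 0\<close> \<open>x0 > 0\<close> by (auto simp: a'_def b'_def)
  moreover have "continuous_on {a'..b'} w"
    using \<open>0 < a'\<close> by (intro continuous_on_subset[OF cont]) auto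
  moreover have "{a'..b'} \<noteq> {}"
    using \<open>a' \<le> x0\<close> \<open>x0 \<le> b'\<close> by auto
  ultimately obtain z where z: "z \<in> {a'..b'}" and zmax: "\<And>y. y \<in> {a'..b'} \<Longrightarrow> w y \<le> w z"
    using continuous_attains_sup[OF compact_Icc] by blast
  have "w x0 \<le> w z"
    using zmax \<open>a' \<le> x0\<close> \<open>x0 \<le> b'\<close> by simp
  have "w y \<le> w z" if "y > 0" for y
  proof -
    consider "y < a'" | "y \<in> {a'..b'}" | "y > b'"
      by force
    then show ?thesis
    proof cases
      case 1
      then show ?thesis
        using near0[OF \<open>y > 0\<close>] \<open>w x0 \<le> w z\<close> \<open>a > 0\<close> by (force simp: a'_def)
    next
      case 3
      then show ?thesis
        using near_top[of y] \<open>w x0 \<le> w z\<close> by (simp add: b'_def)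
    qed (rule zmax)
  qed
  moreover have "z > 0"
    using z \<open>0 < a'\<close> by simp
  ultimately show ?thesis
    by blast
qed

lemma maximum_principle_halfline:
  fixes w w' w'' p :: "real \<Rightarrow> real"
  assumes derivs: "has_two_derivatives_on {0<..} w w' w''"
    and subsolution: "\<And>x. x > 0 \<Longrightarrow> x\<^sup>2 * w'' x + x * w' x - p x * w x \<ge> 0"
    and p_pos: "\<And>x. x > 0 \<Longrightarrow> p x > 0"
    and lim0: "(w \<longlongrightarrow> 0) (at_right 0)" and lim_top: "(w \<longlongrightarrow> 0) at_top" and "x > 0"
  shows "w x \<le> 0"
proof (rule ccontr)
  assume "\<not> w x \<le> 0"
  have w': "\<And>y. y > 0 \<Longrightarrow> (w has_real_derivative w' y) (at y)"
    and w'': "\<And>y. y > 0 \<Longrightarrow> (w' has_real_derivative w'' y) (at y)"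
    using derivs by (simp_all add: has_two_derivatives_on_def)
  have "continuous_on {0<..} w"
    by (rule continuous_at_imp_continuous_on) (use w' DERIV_isCont in force)
  then obtain z where "z > 0" and zmax: "\<And>y. y > 0 \<Longrightarrow> w y \<le> w z"
    using attains_max_on_halfline[OF _ lim0 lim_top \<open>x > 0\<close>] \<open>\<not> w x \<le> 0\<close> by force
  have "w z > 0"
    using zmax[OF \<open>x > 0\<close>] \<open>\<not> w x \<le> 0\<close> by simp
  have near_z: "y > 0" if "\<bar>y - z\<bar> < z" for y
    using that by linarith
  have "w' z = 0"
  proof (rule DERIV_local_max[OF w'[OF \<open>z > 0\<close>] \<open>z > 0\<close>], intro allI impI)
    fix y
    assume "\<bar>z - y\<bar> < z"
    then show "w y \<le> w z"
      by (intro zmax near_z) linarith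
  qed
  moreover have "w'' z \<le> 0"
  proof (rule local_max_imp_second_deriv_nonpos[OF \<open>z > 0\<close> _ w''[OF \<open>z > 0\<close>]])
    show "(w has_real_derivative w' y) (at y)" "w y \<le> w z" if "\<bar>y - z\<bar> < z" for y
      using w' zmax near_z[OF that] by simp_all
  qed
  then have "z\<^sup>2 * w'' z \<le> 0"
    by (simp add: mult_nonneg_nonpos)
  moreover have "p z * w z > 0"
    using p_pos[OF \<open>z > 0\<close>] \<open>w z > 0\<close> by simp
  ultimately have "z\<^sup>2 * w'' z + z * w' z - p z * w z < 0"
    by simp
  with subsolution[OF \<open>z > 0\<close>] show False
    by simp
qed

section \<open>The modified Bessel operator\<close>

text \<open>With \<open>z = 2 x\<close> this is the modified Bessel operator
  \<open>z\<^sup>2 w'' + z w' - (z\<^sup>2 + (2 k)\<^sup>2) w\<close> of order \<open>2 k\<close>.\<close>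

definition bessel_op ::
    "real \<Rightarrow> (real \<Rightarrow> real) \<Rightarrow> (real \<Rightarrow> real) \<Rightarrow> (real \<Rightarrow> real) \<Rightarrow> real \<Rightarrow> real" where
  "bessel_op k w w' w'' x = x\<^sup>2 * w'' x + x * w' x - 4 * (x\<^sup>2 + k\<^sup>2) * w x"

lemma bessel_op_diff:
  "bessel_op k (\<lambda>x. f x - g x) (\<lambda>x. f' x - g' x) (\<lambda>x. f'' x - g'' x) x
     = bessel_op k f f' f'' x - bessel_op k g g' g'' x"
  unfolding bessel_op_def by (simp add: algebra_simps)

lemma bessel_op_cmult:
  "bessel_op k (\<lambda>x. c * f x) (\<lambda>x. c * f' x) (\<lambda>x. c * f'' x) x = c * bessel_op k f f' f'' x"
  unfolding bessel_op_def by (simp add: algebra_simps)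

lemma bessel_op_index_shift:
  "bessel_op k w w' w'' x = bessel_op (k + 1) w w' w'' x + 4 * (2 * k + 1) * w x"
  unfolding bessel_op_def by (simp add: algebra_simps power2_eq_square)

lemma bessel_comparison:
  fixes k :: real
  assumes "has_two_derivatives_on {0<..} f f' f''" and "has_two_derivatives_on {0<..} g g' g''"
    and ineq: "\<And>x. x > 0 \<Longrightarrow> bessel_op k g g' g'' x \<le> bessel_op k f f' f'' x"
    and "(f \<longlongrightarrow> 0) (at_right 0)" and "(g \<longlongrightarrow> 0) (at_right 0)"
    and "(f \<longlongrightarrow> 0) at_top" and "(g \<longlongrightarrow> 0) at_top"
    and "x > 0"
  shows "f x \<le> g x"
proof -
  have "f x - g x \<le> 0"
  proof (rule maximum_principle_halfline[where w = "\<lambda>x. f x - g x" and w' = "\<lambda>x. f' x - g' x"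
        and w'' = "\<lambda>x. f'' x - g'' x" and p = "\<lambda>x. 4 * (x\<^sup>2 + k\<^sup>2)"])
    show "has_two_derivatives_on {0<..} (\<lambda>x. f x - g x) (\<lambda>x. f' x - g' x) (\<lambda>x. f'' x - g'' x)"
      using assms(1,2) by (rule has_two_derivatives_on_diff)
    show "((\<lambda>x. f x - g x) \<longlongrightarrow> 0) (at_right 0)" "((\<lambda>x. f x - g x) \<longlongrightarrow> 0) at_top"
      using tendsto_diff[OF assms(4,5)] tendsto_diff[OF assms(6,7)] by simp_all
    fix y :: real
    assume "y > 0"
    then show "4 * (y\<^sup>2 + k\<^sup>2) > 0"
      by (simp add: add_pos_nonneg)
    show "y\<^sup>2 * (f'' y - g'' y) + y * (f' y - g' y) - 4 * (y\<^sup>2 + k\<^sup>2) * (f y - g y) \<ge> 0"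
      using ineq[OF \<open>y > 0\<close>] by (simp add: bessel_op_def algebra_simps)
  qed (rule \<open>x > 0\<close>)
  then show ?thesis
    by simp
qed

section \<open>The real part of \<open>phi\<close> and its derivatives\<close>

definition phi_real_deriv :: "nat \<Rightarrow> nat \<Rightarrow> real \<Rightarrow> real" where
  "phi_real_deriv m k x =
     integral {0..pi} (\<lambda>t. (-2 * sin t) ^ m * exp (-2 * x * sin t) * cos (2 * real k * t))"

abbreviation phi_real :: "nat \<Rightarrow> real \<Rightarrow> real" where
  "phi_real \<equiv> phi_real_deriv 0"

lemma has_integral_phi_real_deriv:
  "((\<lambda>t. (-2 * sin t) ^ m * exp (-2 * x * sin t) * cos (2 * real k * t))
     has_integral phi_real_deriv m k x) {0..pi}"
  unfolding phi_real_deriv_def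
  by (intro integrable_integral integrable_continuous_interval continuous_intros)

lemma has_real_derivative_phi_real_deriv:
  "(phi_real_deriv m k has_real_derivative phi_real_deriv (Suc m) k x) (at x)"
proof -
  have "((\<lambda>x. integral (cbox 0 pi)
            (\<lambda>t. (-2 * sin t) ^ m * exp (-2 * x * sin t) * cos (2 * real k * t)))
        has_field_derivative integral (cbox 0 pi)
            (\<lambda>t. (-2 * sin t) ^ Suc m * exp (-2 * x * sin t) * cos (2 * real k * t)))
        (at x within UNIV)"
    by (rule leibniz_rule_field_derivative)
      (auto intro!: derivative_eq_intros integrable_continuous_interval continuous_intros
        simp: split_beta)
  then show ?thesis
    unfolding phi_real_deriv_def by simp
qed

lemma has_two_derivatives_phi_real:
  "has_two_derivatives_on S (phi_real k) (phi_real_deriv 1 k) (phi_real_deriv 2 k)"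
  using has_real_derivative_phi_real_deriv[of 0 k] has_real_derivative_phi_real_deriv[of 1 k]
  by (simp add: has_two_derivatives_on_def numeral_2_eq_2)

lemma phi_eq_phi_real: "phi k x = complex_of_real (phi_real k x)"
proof -
  let ?E = "\<lambda>t. exp (-2 * x * sin t)"
  have sin_integrable: "(\<lambda>t. ?E t * sin (2 * real k * t)) integrable_on {0..pi}"
    by (intro integrable_continuous_interval continuous_intros)
  have "integral {0..pi} (\<lambda>t. ?E t * sin (2 * real k * t)) = 0"
  proof (rule integral_eq_0_if_odd_about_midpoint[OF sin_integrable])
    have "sin (2 * real k * (0 + pi - t)) = - sin (2 * real k * t)" for t
      using sin_npi[of "2 * k"] cos_npi[of "2 * k"]
      by (simp add: right_diff_distrib sin_diff mult.assoc)
    then show "?E (0 + pi - t) * sin (2 * real k * (0 + pi - t)) = - (?E t * sin (2 * real k * t))"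
      for t
      by simp
  qed
  with sin_integrable have "((\<lambda>t. ?E t * sin (2 * real k * t)) has_integral 0) {0..pi}"
    by (metis integrable_integral)
  then have "((\<lambda>t. of_real (?E t * cos (2 * real k * t)) + \<i> * of_real (?E t * sin (2 * real k * t)))
          has_integral of_real (phi_real k x) + \<i> * of_real 0) {0..pi}"
    using has_integral_phi_real_deriv[of 0 x k]
    by (intro has_integral_add has_integral_mult_right has_integral_of_real) simp_all
  moreover have "exp (complex_of_real (-2 * x * sin t)) * exp (\<i> * of_real (2 * real k * t))
      = of_real (?E t * cos (2 * real k * t)) + \<i> * of_real (?E t * sin (2 * real k * t))" for t
    by (simp add: complex_eq_iff Re_exp Im_exp)
  ultimately show ?thesis
    unfolding phi_def by (simp add: integral_unique)
qed

lemma bessel_op_phi_real: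
  "bessel_op (real k) (phi_real k) (phi_real_deriv 1 k) (phi_real_deriv 2 k) x = -4 * x"
proof -
  define E where "E t = exp (-2 * x * sin t)" for t :: real
  define V where "V t = 2 * x * cos t * E t * cos (2 * real k * t) - 2 * real k * E t * sin (2 * real k * t)"
    for t :: real
  define g where "g t = x\<^sup>2 * ((-2 * sin t) ^ 2 * E t * cos (2 * real k * t))
      + x * ((-2 * sin t) ^ 1 * E t * cos (2 * real k * t))
      - 4 * (x\<^sup>2 + (real k)\<^sup>2) * ((-2 * sin t) ^ 0 * E t * cos (2 * real k * t))" for t :: real
  have "(g has_integral
          bessel_op (real k) (phi_real k) (phi_real_deriv 1 k) (phi_real_deriv 2 k) x) {0..pi}"
    unfolding g_def E_def bessel_op_def
    by (intro has_integral_diff has_integral_add has_integral_mult_right has_integral_phi_real_deriv)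
  moreover have "(g has_integral V pi - V 0) {0..pi}"
  proof (rule has_integral_real_derivative)
    fix t
    have "(V has_real_derivative
             -2 * x * sin t * E t * cos (2 * real k * t) - 4 * x\<^sup>2 * (cos t)\<^sup>2 * E t * cos (2 * real k * t)
             - 4 * (real k)\<^sup>2 * E t * cos (2 * real k * t)) (at t)"
      unfolding V_def E_def
      by (rule derivative_eq_intros refl | simp)+ (simp add: algebra_simps power2_eq_square)
    moreover have "g t = -2 * x * sin t * E t * cos (2 * real k * t)
        - 4 * x\<^sup>2 * (cos t)\<^sup>2 * E t * cos (2 * real k * t) - 4 * (real k)\<^sup>2 * E t * cos (2 * real k * t)"
      by (simp add: g_def cos_squared_eq algebra_simps)
    ultimately show "(V has_real_derivative g t) (at t)"
      by simp
  qed simp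
  moreover have "V pi - V 0 = -4 * x"
    using sin_npi[of "2 * k"] cos_npi[of "2 * k"] by (simp add: V_def E_def mult.assoc)
  ultimately show ?thesis
    using has_integral_unique by metis
qed

lemma phi_real_at_0: "k \<ge> 1 \<Longrightarrow> phi_real k 0 = 0"
proof -
  assume "k \<ge> 1"
  have "((\<lambda>t. cos (2 * real k * t)) has_integral
          sin (2 * real k * pi) / (2 * k) - sin (2 * real k * 0) / (2 * k)) {0..pi}"
    using \<open>k \<ge> 1\<close> by (intro has_integral_real_derivative) (auto intro!: derivative_eq_intros)
  then have "((\<lambda>t. cos (2 * real k * t)) has_integral 0) {0..pi}"
    using sin_npi[of "2 * k"] by (simp add: mult.assoc)
  then show ?thesis
    unfolding phi_real_deriv_def by (simp add: integral_unique)
qed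

lemma phi_real_tendsto_at_right_0: "k \<ge> 1 \<Longrightarrow> (phi_real k \<longlongrightarrow> 0) (at_right 0)"
  using DERIV_isCont[OF has_real_derivative_phi_real_deriv] phi_real_at_0
  by (metis isCont_def filterlim_at_split)

lemma integral_exp_neg_sin_le:
  fixes x :: real
  assumes "x > 0"
  shows "integral {0..pi} (\<lambda>t. exp (-2 * x * sin t)) \<le> (1 + pi / 2) / x"
proof -
  define E where "E = (\<lambda>t. exp (-2 * x * sin t))"
  define A where "A = integral {0..pi} (\<lambda>t. (cos t)\<^sup>2 * E t)"
  define B where "B = integral {0..pi} (\<lambda>t. sin t * E t)"
  have A: "((\<lambda>t. (cos t)\<^sup>2 * E t) has_integral A) {0..pi}"
    unfolding A_def E_def by (intro integrable_integral integrable_continuous_interval continuous_intros)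
  have B: "((\<lambda>t. sin t * E t) has_integral B) {0..pi}"
    unfolding B_def E_def by (intro integrable_integral integrable_continuous_interval continuous_intros)
  have "((\<lambda>t. -2 * x * ((cos t)\<^sup>2 * E t) - sin t * E t) has_integral
          cos pi * E pi - cos 0 * E 0) {0..pi}"
  proof (rule has_integral_real_derivative)
    fix t
    show "((\<lambda>t. cos t * E t) has_real_derivative -2 * x * ((cos t)\<^sup>2 * E t) - sin t * E t) (at t)"
      unfolding E_def
      by (rule derivative_eq_intros refl | simp)+ (simp add: algebra_simps power2_eq_square)
  qed simp
  then have "-2 * x * A - B = -2"
    using has_integral_unique[OF has_integral_diff[OF has_integral_mult_right[OF A, of "-2 * x"] B]]
    by (simp add: E_def)
  moreover have "B \<ge> 0"
    using B by (rule has_integral_nonneg) (auto simp: E_def sin_ge_zero)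
  ultimately have "A \<le> 1 / x"
    using assms by (simp add: field_simps)
  have "sin t * E t \<le> 1 / (2 * x)" for t
  proof -
    have "2 * x * sin t \<le> exp (2 * x * sin t)"
      using exp_ge_add_one_self[of "2 * x * sin t"] by linarith
    then show ?thesis
      using assms by (simp add: E_def exp_minus field_simps)
  qed
  then have "B \<le> pi / (2 * x)"
    using has_integral_le[OF B has_integral_const_real[of "1 / (2 * x)" 0 pi]] by simp
  have "integral {0..pi} E \<le> A + B"
  proof (rule has_integral_le[OF integrable_integral has_integral_add[OF A B]])
    show "E integrable_on {0..pi}"
      unfolding E_def by (intro integrable_continuous_interval continuous_intros)
    fix t :: real
    assume "t \<in> {0..pi}"
    then have "(sin t)\<^sup>2 \<le> sin t"
      by (simp add: power2_eq_square mult_left_le sin_ge_zero)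
    then have "(sin t)\<^sup>2 * E t \<le> sin t * E t"
      by (simp add: E_def mult_right_mono)
    then show "E t \<le> (cos t)\<^sup>2 * E t + sin t * E t"
      by (simp add: sin_squared_eq algebra_simps)
  qed
  with \<open>A \<le> 1 / x\<close> \<open>B \<le> pi / (2 * x)\<close> have "integral {0..pi} E \<le> (1 + pi / 2) / x"
    by (simp add: add_divide_distrib)
  then show ?thesis
    by (simp add: E_def)
qed

lemma phi_real_tendsto_at_top: "(phi_real k \<longlongrightarrow> 0) at_top"
proof (rule Lim_null_comparison)
  show "\<forall>\<^sub>F x in at_top. norm (phi_real k x) \<le> (1 + pi / 2) / x"
    using eventually_gt_at_top[of 0]
  proof eventually_elim
    case (elim x)
    have "norm (phi_real k x) \<le> integral {0..pi} (\<lambda>t. exp (-2 * x * sin t))"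
      unfolding phi_real_deriv_def
      by (intro integral_norm_bound_integral integrable_continuous_interval continuous_intros)
        (simp add: abs_mult)
    then show ?case
      using integral_exp_neg_sin_le[OF elim] by linarith
  qed
  show "((\<lambda>x. (1 + pi / 2) / x) \<longlongrightarrow> 0) at_top"
    by (intro tendsto_divide_0[OF tendsto_const] filterlim_at_top_imp_at_infinity filterlim_ident)
qed

lemma phi_real_diff_tendsto_0:
  assumes "n \<ge> 1"
  shows "((\<lambda>x. phi_real n x - phi_real (n + 1) x) \<longlongrightarrow> 0) (at_right 0)"
    and "((\<lambda>x. phi_real n x - phi_real (n + 1) x) \<longlongrightarrow> 0) at_top"
  using tendsto_diff[OF phi_real_tendsto_at_right_0 phi_real_tendsto_at_right_0, of n "n + 1"]
    tendsto_diff[OF phi_real_tendsto_at_top phi_real_tendsto_at_top, of n "n + 1"] assms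
  by simp_all

section \<open>The comparison functions\<close>

definition lorentz :: "real \<Rightarrow> real \<Rightarrow> real" where
  "lorentz k x = x / (k\<^sup>2 + x\<^sup>2)"

definition lorentz' :: "real \<Rightarrow> real \<Rightarrow> real" where
  "lorentz' k x = (k\<^sup>2 - x\<^sup>2) / (k\<^sup>2 + x\<^sup>2)\<^sup>2"

definition lorentz'' :: "real \<Rightarrow> real \<Rightarrow> real" where
  "lorentz'' k x = (2 * x ^ 3 - 6 * k\<^sup>2 * x) / (k\<^sup>2 + x\<^sup>2) ^ 3"

lemma has_real_derivative_lorentz:
  "x > 0 \<Longrightarrow> (lorentz k has_real_derivative lorentz' k x) (at x)"
  unfolding lorentz_def lorentz'_def
  by (rule derivative_eq_intros refl | simp add: add_nonneg_pos)+
    (simp add: field_simps power2_eq_square)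

lemma has_real_derivative_lorentz':
  assumes "x > 0"
  shows "(lorentz' k has_real_derivative lorentz'' k x) (at x)"
proof -
  define q where "q = k\<^sup>2 + x\<^sup>2"
  have "q > 0"
    using assms by (simp add: q_def add_nonneg_pos)
  have "(lorentz' k has_real_derivative
      (- (2 * x) * q\<^sup>2 - (k\<^sup>2 - x\<^sup>2) * (2 * q * (2 * x))) / (q\<^sup>2)\<^sup>2) (at x)"
    unfolding lorentz'_def q_def
    by (rule derivative_eq_intros refl | simp add: add_nonneg_pos assms)+
      (use assms in \<open>auto simp: power2_eq_square\<close>)
  also have "(- (2 * x) * q\<^sup>2 - (k\<^sup>2 - x\<^sup>2) * (2 * q * (2 * x))) / (q\<^sup>2)\<^sup>2
      = (- (2 * x) * q - (k\<^sup>2 - x\<^sup>2) * (2 * (2 * x))) / q ^ 3"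
    using \<open>q > 0\<close> by (simp add: field_simps power2_eq_square power3_eq_cube)
  also have "\<dots> = lorentz'' k x"
    by (simp add: lorentz''_def q_def[symmetric])
      (simp add: q_def algebra_simps power2_eq_square power3_eq_cube)
  finally show ?thesis .
qed

lemma has_two_derivatives_lorentz:
  "has_two_derivatives_on {0<..} (lorentz k) (lorentz' k) (lorentz'' k)"
  by (simp add: has_two_derivatives_on_def has_real_derivative_lorentz has_real_derivative_lorentz')

lemma bessel_op_lorentz_bounds:
  assumes "x > 0"
  shows "-4 * x - lorentz k x \<le> bessel_op k (lorentz k) (lorentz' k) (lorentz'' k) x"
    and "bessel_op k (lorentz k) (lorentz' k) (lorentz'' k) x \<le> -4 * x + lorentz k x"
proof -
  define q where "q = k\<^sup>2 + x\<^sup>2"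
  have "q > 0"
    using assms by (simp add: q_def add_nonneg_pos)
  define s where "s = 8 * k\<^sup>2 * x ^ 3 / q ^ 3"
  have "bessel_op k (lorentz k) (lorentz' k) (lorentz'' k) x
      = (x\<^sup>2 * (2 * x ^ 3 - 6 * k\<^sup>2 * x) + x * (k\<^sup>2 - x\<^sup>2) * q - 4 * x * q ^ 3) / q ^ 3"
    unfolding bessel_op_def lorentz_def lorentz'_def lorentz''_def add.commute[of "x\<^sup>2"]
      q_def[symmetric]
    using \<open>q > 0\<close> by (simp add: field_simps power2_eq_square power3_eq_cube)
  also have "x\<^sup>2 * (2 * x ^ 3 - 6 * k\<^sup>2 * x) + x * (k\<^sup>2 - x\<^sup>2) * q = x * q\<^sup>2 - 8 * k\<^sup>2 * x ^ 3"
    by (simp add: q_def algebra_simps power2_eq_square power3_eq_cube)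
  also have "(x * q\<^sup>2 - 8 * k\<^sup>2 * x ^ 3 - 4 * x * q ^ 3) / q ^ 3 = -4 * x + lorentz k x - s"
    unfolding lorentz_def s_def q_def[symmetric]
    using \<open>q > 0\<close> by (simp add: field_simps power2_eq_square power3_eq_cube)
  finally have op_eq: "bessel_op k (lorentz k) (lorentz' k) (lorentz'' k) x = -4 * x + lorentz k x - s" .
  have "4 * k\<^sup>2 * x\<^sup>2 \<le> q\<^sup>2"
    using sum_power2_ge_zero[of "k\<^sup>2 - x\<^sup>2" 0] by (simp add: q_def power2_eq_square algebra_simps)
  have "s = (2 * x) * (4 * k\<^sup>2 * x\<^sup>2) / q ^ 3"
    by (simp add: s_def power2_eq_square power3_eq_cube)
  also have "\<dots> \<le> (2 * x) * q\<^sup>2 / q ^ 3"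
    using \<open>4 * k\<^sup>2 * x\<^sup>2 \<le> q\<^sup>2\<close> \<open>q > 0\<close> assms by (intro divide_right_mono mult_left_mono) auto
  also have "\<dots> = 2 * lorentz k x"
    unfolding lorentz_def q_def[symmetric] using \<open>q > 0\<close> by (simp add: power2_eq_square power3_eq_cube)
  finally have "s \<le> 2 * lorentz k x" .
  moreover have "s \<ge> 0"
    using \<open>q > 0\<close> assms by (simp add: s_def)
  ultimately show "-4 * x - lorentz k x \<le> bessel_op k (lorentz k) (lorentz' k) (lorentz'' k) x"
    and "bessel_op k (lorentz k) (lorentz' k) (lorentz'' k) x \<le> -4 * x + lorentz k x"
    unfolding op_eq by linarith+
qed

lemma lorentz_le:
  assumes "1 \<le> k" and "x \<ge> 0"
  shows "lorentz k x \<le> x"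
proof -
  have "1 \<le> k\<^sup>2 + x\<^sup>2"
    using assms(1) one_le_power[of k 2] by (simp add: add_increasing2)
  then have "x * 1 \<le> x * (k\<^sup>2 + x\<^sup>2)"
    using assms(2) by (rule mult_left_mono)
  then show ?thesis
    using \<open>1 \<le> k\<^sup>2 + x\<^sup>2\<close> by (simp add: lorentz_def pos_divide_le_eq)
qed

lemma lorentz_le_succ:
  assumes "1 \<le> k" and "x \<ge> 0"
  shows "lorentz k x \<le> (4 * k + 1) * lorentz (k + 1) x"
proof -
  have "(4 * k + 1) * k\<^sup>2 - (k + 1)\<^sup>2 = 4 * k * (k\<^sup>2 - 1) + 2 * k - 1"
    by (simp add: algebra_simps power2_eq_square)
  moreover have "0 \<le> 4 * k * (k\<^sup>2 - 1)"
    using assms(1) one_le_power[of k 2] by simp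
  moreover have "(4 * k + 1) * (k\<^sup>2 + x\<^sup>2) = (4 * k + 1) * k\<^sup>2 + 4 * k * x\<^sup>2 + x\<^sup>2"
    by (simp add: algebra_simps)
  moreover have "0 \<le> 4 * k * x\<^sup>2"
    using assms by simp
  ultimately have "(k + 1)\<^sup>2 + x\<^sup>2 \<le> (4 * k + 1) * (k\<^sup>2 + x\<^sup>2)"
    using assms(1) by linarith
  from mult_left_mono[OF this assms(2)]
  have "x * ((k + 1)\<^sup>2 + x\<^sup>2) \<le> (4 * k + 1) * x * (k\<^sup>2 + x\<^sup>2)"
    by (simp add: algebra_simps)
  moreover have "k\<^sup>2 + x\<^sup>2 > 0" and "(k + 1)\<^sup>2 + x\<^sup>2 > 0"
    using assms(1) by (simp_all add: add_pos_nonneg)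
  ultimately show ?thesis
    by (simp add: lorentz_def pos_divide_le_eq pos_le_divide_eq)
qed

lemma lorentz_diff:
  "x > 0 \<Longrightarrow>
    lorentz k x - lorentz (k + 1) x = (2 * k + 1) * x / ((k\<^sup>2 + x\<^sup>2) * ((k + 1)\<^sup>2 + x\<^sup>2))"
  by (simp add: lorentz_def add_nonneg_pos field_simps) (simp add: algebra_simps power2_eq_square)

lemma lorentz_tendsto_at_right_0:
  assumes "k \<noteq> 0"
  shows "(lorentz k \<longlongrightarrow> 0) (at_right 0)"
proof -
  have "((\<lambda>x. x / (k\<^sup>2 + x\<^sup>2)) \<longlongrightarrow> 0 / (k\<^sup>2 + 0\<^sup>2)) (at_right 0)"
    using assms by (intro tendsto_intros) auto
  then show ?thesis
    by (simp add: lorentz_def[abs_def])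
qed

lemma lorentz_tendsto_at_top: "(lorentz k \<longlongrightarrow> 0) at_top"
proof (rule Lim_null_comparison)
  show "\<forall>\<^sub>F x in at_top. norm (lorentz k x) \<le> inverse x"
    using eventually_gt_at_top[of 0]
  proof eventually_elim
    case (elim x)
    have "x / (k\<^sup>2 + x\<^sup>2) \<le> x / x\<^sup>2"
      using elim by (intro divide_left_mono mult_pos_pos add_nonneg_pos) auto
    also have "\<dots> = inverse x"
      using elim by (simp add: power2_eq_square divide_inverse)
    finally show ?case
      using elim by (simp add: lorentz_def)
  qed
  show "((\<lambda>x::real. inverse x) \<longlongrightarrow> 0) at_top"
    by (rule tendsto_inverse_0_at_top[OF filterlim_ident])
qed

lemma lorentz_diff_tendsto_0:
  assumes "k > 0"
  shows "((\<lambda>x. c * (lorentz k x - lorentz (k + 1) x)) \<longlongrightarrow> 0) (at_right 0)"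
    and "((\<lambda>x. c * (lorentz k x - lorentz (k + 1) x)) \<longlongrightarrow> 0) at_top"
  using tendsto_diff[OF lorentz_tendsto_at_right_0 lorentz_tendsto_at_right_0, of k "k + 1"]
    tendsto_diff[OF lorentz_tendsto_at_top lorentz_tendsto_at_top, of k "k + 1"] assms
  by (auto intro: tendsto_mult_right_zero)

lemma phi_real_ge_lorentz:
  assumes "k \<ge> 1" and "x > 0"
  shows "3 / 4 * lorentz k x \<le> phi_real k x"
proof (rule bessel_comparison[where k = "real k" and f = "\<lambda>x. 3 / 4 * lorentz k x"
      and f' = "\<lambda>x. 3 / 4 * lorentz' k x" and f'' = "\<lambda>x. 3 / 4 * lorentz'' k x"
      and g' = "phi_real_deriv 1 k" and g'' = "phi_real_deriv 2 k"])
  fix y :: real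
  assume "y > 0"
  show "bessel_op k (phi_real k) (phi_real_deriv 1 k) (phi_real_deriv 2 k) y
      \<le> bessel_op k (\<lambda>x. 3 / 4 * lorentz k x) (\<lambda>x. 3 / 4 * lorentz' k x)
          (\<lambda>x. 3 / 4 * lorentz'' k x) y"
    unfolding bessel_op_cmult bessel_op_phi_real
    using bessel_op_lorentz_bounds(1)[OF \<open>y > 0\<close>, of k] lorentz_le[of k y] \<open>k \<ge> 1\<close> \<open>y > 0\<close>
    by simp
qed (intro has_two_derivatives_on_cmult has_two_derivatives_lorentz has_two_derivatives_phi_real
    tendsto_mult_right_zero lorentz_tendsto_at_right_0 lorentz_tendsto_at_top
    phi_real_tendsto_at_right_0 phi_real_tendsto_at_top | use assms in simp)+

lemma phi_real_le_lorentz: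
  assumes "k \<ge> 1" and "x > 0"
  shows "phi_real k x \<le> 2 * lorentz k x"
proof (rule bessel_comparison[where k = "real k" and g = "\<lambda>x. 2 * lorentz k x"
      and g' = "\<lambda>x. 2 * lorentz' k x" and g'' = "\<lambda>x. 2 * lorentz'' k x"
      and f' = "phi_real_deriv 1 k" and f'' = "phi_real_deriv 2 k"])
  fix y :: real
  assume "y > 0"
  show "bessel_op k (\<lambda>x. 2 * lorentz k x) (\<lambda>x. 2 * lorentz' k x) (\<lambda>x. 2 * lorentz'' k x) y
      \<le> bessel_op k (phi_real k) (phi_real_deriv 1 k) (phi_real_deriv 2 k) y"
    unfolding bessel_op_cmult bessel_op_phi_real
    using bessel_op_lorentz_bounds(2)[OF \<open>y > 0\<close>, of k] lorentz_le[of k y] \<open>k \<ge> 1\<close> \<open>y > 0\<close>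
    by simp
qed (intro has_two_derivatives_on_cmult has_two_derivatives_lorentz has_two_derivatives_phi_real
    tendsto_mult_right_zero lorentz_tendsto_at_right_0 lorentz_tendsto_at_top
    phi_real_tendsto_at_right_0 phi_real_tendsto_at_top | use assms in simp)+

lemma bessel_op_phi_real_diff:
  "bessel_op (real n) (\<lambda>x. phi_real n x - phi_real (n + 1) x)
      (\<lambda>x. phi_real_deriv 1 n x - phi_real_deriv 1 (n + 1) x)
      (\<lambda>x. phi_real_deriv 2 n x - phi_real_deriv 2 (n + 1) x) x
    = -4 * (2 * real n + 1) * phi_real (n + 1) x"
  unfolding bessel_op_diff
  using bessel_op_index_shift[of "real n" "phi_real (n + 1)"] bessel_op_phi_real[of n x]
    bessel_op_phi_real[of "n + 1" x]
  by (simp add: algebra_simps)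

lemma bessel_op_lorentz_diff_bounds:
  assumes "x > 0"
  shows "\<bar>bessel_op k (\<lambda>x. lorentz k x - lorentz (k + 1) x) (\<lambda>x. lorentz' k x - lorentz' (k + 1) x)
      (\<lambda>x. lorentz'' k x - lorentz'' (k + 1) x) x + 4 * (2 * k + 1) * lorentz (k + 1) x\<bar>
    \<le> lorentz k x + lorentz (k + 1) x"
  unfolding bessel_op_diff
  using bessel_op_index_shift[of k "lorentz (k + 1)"] bessel_op_lorentz_bounds[OF assms, of k]
    bessel_op_lorentz_bounds[OF assms, of "k + 1"]
  by (simp add: abs_le_iff)

lemma phi_real_diff_ge:
  assumes "n \<ge> 1" and "x > 0"
  shows "1 / 2 * (lorentz n x - lorentz (real n + 1) x) \<le> phi_real n x - phi_real (n + 1) x"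
proof (rule bessel_comparison[where k = "real n"
      and f = "\<lambda>x. 1 / 2 * (lorentz n x - lorentz (real n + 1) x)"
      and f' = "\<lambda>x. 1 / 2 * (lorentz' n x - lorentz' (real n + 1) x)"
      and f'' = "\<lambda>x. 1 / 2 * (lorentz'' n x - lorentz'' (real n + 1) x)"
      and g' = "\<lambda>x. phi_real_deriv 1 n x - phi_real_deriv 1 (n + 1) x"
      and g'' = "\<lambda>x. phi_real_deriv 2 n x - phi_real_deriv 2 (n + 1) x"])
  fix y :: real
  assume "y > 0"
  have "(2 * real n + 1) * (3 / 4 * lorentz (real n + 1) y) \<le> (2 * real n + 1) * phi_real (n + 1) y"
    using phi_real_ge_lorentz[of "n + 1" y] \<open>y > 0\<close> by (intro mult_left_mono) (auto simp: add.commute)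
  moreover have "lorentz n y \<le> (4 * real n + 1) * lorentz (real n + 1) y"
    using lorentz_le_succ[of n y] \<open>n \<ge> 1\<close> \<open>y > 0\<close> by simp
  ultimately show "bessel_op n (\<lambda>x. phi_real n x - phi_real (n + 1) x)
        (\<lambda>x. phi_real_deriv 1 n x - phi_real_deriv 1 (n + 1) x)
        (\<lambda>x. phi_real_deriv 2 n x - phi_real_deriv 2 (n + 1) x) y
      \<le> bessel_op n (\<lambda>x. 1 / 2 * (lorentz n x - lorentz (real n + 1) x))
        (\<lambda>x. 1 / 2 * (lorentz' n x - lorentz' (real n + 1) x))
        (\<lambda>x. 1 / 2 * (lorentz'' n x - lorentz'' (real n + 1) x)) y"
    unfolding bessel_op_cmult bessel_op_phi_real_diff
    using bessel_op_lorentz_diff_bounds[OF \<open>y > 0\<close>, of n]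
    by (simp add: abs_le_iff algebra_simps)
qed (intro has_two_derivatives_on_cmult has_two_derivatives_on_diff has_two_derivatives_lorentz
    has_two_derivatives_phi_real lorentz_diff_tendsto_0 phi_real_diff_tendsto_0 | use assms in simp)+

lemma phi_real_diff_le:
  assumes "n \<ge> 1" and "x > 0"
  shows "phi_real n x - phi_real (n + 1) x \<le> 4 * (lorentz n x - lorentz (real n + 1) x)"
proof (rule bessel_comparison[where k = "real n"
      and g = "\<lambda>x. 4 * (lorentz n x - lorentz (real n + 1) x)"
      and g' = "\<lambda>x. 4 * (lorentz' n x - lorentz' (real n + 1) x)"
      and g'' = "\<lambda>x. 4 * (lorentz'' n x - lorentz'' (real n + 1) x)"
      and f' = "\<lambda>x. phi_real_deriv 1 n x - phi_real_deriv 1 (n + 1) x"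
      and f'' = "\<lambda>x. phi_real_deriv 2 n x - phi_real_deriv 2 (n + 1) x"])
  fix y :: real
  assume "y > 0"
  have "(2 * real n + 1) * phi_real (n + 1) y \<le> (2 * real n + 1) * (2 * lorentz (real n + 1) y)"
    using phi_real_le_lorentz[of "n + 1" y] \<open>y > 0\<close> by (intro mult_left_mono) (auto simp: add.commute)
  moreover have "lorentz n y \<le> (4 * real n + 1) * lorentz (real n + 1) y"
    using lorentz_le_succ[of n y] \<open>n \<ge> 1\<close> \<open>y > 0\<close> by simp
  ultimately show "bessel_op n (\<lambda>x. 4 * (lorentz n x - lorentz (real n + 1) x))
        (\<lambda>x. 4 * (lorentz' n x - lorentz' (real n + 1) x))
        (\<lambda>x. 4 * (lorentz'' n x - lorentz'' (real n + 1) x)) y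
      \<le> bessel_op n (\<lambda>x. phi_real n x - phi_real (n + 1) x)
        (\<lambda>x. phi_real_deriv 1 n x - phi_real_deriv 1 (n + 1) x)
        (\<lambda>x. phi_real_deriv 2 n x - phi_real_deriv 2 (n + 1) x) y"
    unfolding bessel_op_cmult bessel_op_phi_real_diff
    using bessel_op_lorentz_diff_bounds[OF \<open>y > 0\<close>, of n]
    by (simp add: abs_le_iff algebra_simps)
qed (intro has_two_derivatives_on_cmult has_two_derivatives_on_diff has_two_derivatives_lorentz
    has_two_derivatives_phi_real lorentz_diff_tendsto_0 phi_real_diff_tendsto_0 | use assms in simp)+

theorem proposition3p7:
  fixes x :: real and n :: nat
  assumes "x > 0" and "n \<ge> 1"
  shows "Im (phi n x - phi (n+1) x) = 0
    \<and> (1/2) * ((2*n+1)*x / ((n^2 + x^2) * ((n+1)^2 + x^2))) \<le> Re (phi n x - phi (n+1) x)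
    \<and> Re (phi n x - phi (n+1) x) \<le> 4 * ((2*n+1)*x / ((n^2 + x^2) * ((n+1)^2 + x^2)))"
proof -
  have phi_diff: "phi n x - phi (n + 1) x = complex_of_real (phi_real n x - phi_real (n + 1) x)"
    by (simp add: phi_eq_phi_real)
  have lorentz_form: "(2*n+1)*x / ((n^2 + x^2) * ((n+1)^2 + x^2)) = lorentz n x - lorentz (real n + 1) x"
    using lorentz_diff[OF \<open>x > 0\<close>, of n] by (simp add: add.commute)
  show ?thesis
    unfolding phi_diff lorentz_form
    using phi_real_diff_ge[OF assms(2,1)] phi_real_diff_le[OF assms(2,1)] by simp
qed

end
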